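(* The truncated cube (the convex polyhedron with $8$ triangular and $6$ octagonal faces obtained by truncating the vertices of a cube, in which every triangle is surrounded by three octagons and no two triangles share a vertex) has no facet path.
   Context: For a polyhedron, the (vertex-facet) incidence graph is the bipartite graph whose nodes are the faces (facets) and vertices of the polyhedron, with an arc $(v,f)$ whenever $v$ is a vertex of face $f$. A facet path is a trail $(v_0,f_1,v_1,f_2,\dots,f_k,v_k)$ in the incidence graph (no arc repeated) that contains every facet node exactly once; vertex nodes may repeat. *)

theory Defs
  imports Main
begin

text \<open>A polyhedron is represented combinatorially by its vertex set V, its facet set F
and its incidence relation inc (inc v f means v is a vertex of facet f).
A facet path is a trail v0, f1, v1, ..., fk, vk in the bipartite incidence graph
(consecutive nodes adjacent, no arc repeated) visiting every facet node exactly once.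
We encode it by the vertex list vs = [v0,...,vk] and the facet list fs = [f1,...,fk].\<close>

definition trail_arcs :: "'v list \<Rightarrow> 'f list \<Rightarrow> ('v \<times> 'f) list" where
  "trail_arcs vs fs = concat (map (\<lambda>i. [(vs ! i, fs ! i), (vs ! Suc i, fs ! i)]) [0..<length fs])"

definition facet_path ::
  "'v set \<Rightarrow> 'f set \<Rightarrow> ('v \<Rightarrow> 'f \<Rightarrow> bool) \<Rightarrow> 'v list \<Rightarrow> 'f list \<Rightarrow> bool" where
  "facet_path V F inc vs fs \<longleftrightarrow>
     length vs = Suc (length fs) \<and>
     set vs \<subseteq> V \<and> set fs \<subseteq> F \<and>
     (\<forall>i < length fs. inc (vs ! i) (fs ! i) \<and> inc (vs ! Suc i) (fs ! i)) \<and>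
     distinct (trail_arcs vs fs) \<and>
     distinct fs \<and> set fs = F"

definition has_facet_path :: "'v set \<Rightarrow> 'f set \<Rightarrow> ('v \<Rightarrow> 'f \<Rightarrow> bool) \<Rightarrow> bool" where
  "has_facet_path V F inc \<longleftrightarrow> (\<exists>vs fs. facet_path V F inc vs fs)"

text \<open>Cube vertices are c \<in> {0..<8}, read as bit vectors (bit j of c = odd (c div 2^j)),
axes are j \<in> {0,1,2}. The truncated cube has one vertex (c,i) for each cube vertex c
and each axis i: the point on the cube edge at c in direction i near c (24 vertices).
Its facets are the 8 triangles Tri c (cutting off cube vertex c), with vertices (c,0),(c,1),(c,2),
and the 6 octagons Oct j b (the truncated cube facet with x_j = b), with vertices (c,i)
where bit j of c is b and i \<noteq> j.\<close>

datatype tc_face = Tri nat | Oct nat bool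

definition tc_vertices :: "(nat \<times> nat) set" where
  "tc_vertices = {0..<8} \<times> {0..<3}"

definition tc_faces :: "tc_face set" where
  "tc_faces = Tri ` {0..<8} \<union> {Oct j b | j b. j < 3}"

fun tc_inc :: "nat \<times> nat \<Rightarrow> tc_face \<Rightarrow> bool" where
  "tc_inc (c, i) (Tri d) \<longleftrightarrow> (c, i) \<in> tc_vertices \<and> d = c"
| "tc_inc (c, i) (Oct j b) \<longleftrightarrow> (c, i) \<in> tc_vertices \<and> j < 3 \<and> j \<noteq> i \<and> odd (c div 2 ^ j) = b"

end

theory Submission
  imports Defs
begin

text \<open>Consecutive facets f_i, f_(i+1) of a facet path share the vertex v_i between them.
  The eight triangles of the truncated cube are pairwise vertex-disjoint, so no two of them
  are consecutive in a facet path. But among the 14 facets of a facet path at most 7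
  pairwise non-consecutive positions can be chosen.\<close>

lemma successively_iff_nth:
  "successively P xs \<longleftrightarrow> (\<forall>i. Suc i < length xs \<longrightarrow> P (xs ! i) (xs ! Suc i))"
proof (induction xs rule: induct_list012)
  case (3 x y zs)
  show ?case
    unfolding successively.simps "3.IH"(2) by (auto simp: less_Suc_eq_0_disj)
qed simp_all

lemma length_filter_if_no_two_adjacent:
  assumes "successively (\<lambda>x y. \<not> (P x \<and> P y)) xs"
  shows "2 * length (filter P xs) \<le> length xs + 1"
  using assms
proof (induction xs rule: induct_list012)
  case (3 x y zs)
  then have "successively (\<lambda>x y. \<not> (P x \<and> P y)) zs"
    by (cases zs) auto
  with 3 show ?case by auto
qed simp_all

lemma facet_path_vertex_disjoint_facets_card_le:
  assumes path: "facet_path V F inc vs fs"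
    and "T \<subseteq> F"
    and disjoint: "\<And>f g v. f \<in> T \<Longrightarrow> g \<in> T \<Longrightarrow> inc v f \<Longrightarrow> inc v g \<Longrightarrow> f = g"
  shows "2 * card T \<le> card F + 1"
proof -
  have inc: "\<And>i. i < length fs \<Longrightarrow> inc (vs ! i) (fs ! i) \<and> inc (vs ! Suc i) (fs ! i)"
    and dist: "distinct fs" and set_fs: "set fs = F"
    using path unfolding facet_path_def by auto
  have "successively (\<lambda>f g. \<not> (f \<in> T \<and> g \<in> T)) fs"
    unfolding successively_iff_nth
  proof (intro allI impI notI)
    fix i assume i: "Suc i < length fs" and "fs ! i \<in> T \<and> fs ! Suc i \<in> T"
    with inc[of i] inc[of "Suc i"] have "fs ! i = fs ! Suc i"
      by (intro disjoint[of _ _ "vs ! Suc i"]) auto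
    with dist i show False by (simp add: nth_eq_iff_index_eq)
  qed
  then have "2 * length (filter (\<lambda>f. f \<in> T) fs) \<le> length fs + 1"
    by (rule length_filter_if_no_two_adjacent)
  moreover have "length (filter (\<lambda>f. f \<in> T) fs) = card T"
  proof -
    have "set (filter (\<lambda>f. f \<in> T) fs) = T"
      using set_fs \<open>T \<subseteq> F\<close> by auto
    with dist show ?thesis
      using distinct_card[of "filter (\<lambda>f. f \<in> T) fs"] by simp
  qed
  moreover have "length fs = card F"
    using distinct_card[OF dist] set_fs by simp
  ultimately show ?thesis by simp
qed

lemma tc_triangles_vertex_disjoint:
  "tc_inc v (Tri c) \<Longrightarrow> tc_inc v (Tri d) \<Longrightarrow> c = d"
  by (cases v) simp

lemma card_tc_triangles: "card (Tri ` {0..<8}) = 8"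
  by (simp add: card_image inj_on_def)

lemma card_tc_faces: "card tc_faces = 14"
proof -
  have octagons: "{Oct j b | j b. j < 3} = (\<lambda>(j, b). Oct j b) ` ({0..<3} \<times> UNIV)"
    by auto
  have "card ((\<lambda>(j, b). Oct j b) ` ({0..<3::nat} \<times> UNIV)) = 6"
    by (simp add: card_image inj_on_def card_UNIV_bool)
  moreover have "Tri ` {0..<8} \<inter> (\<lambda>(j, b). Oct j b) ` ({0..<3} \<times> UNIV) = {}"
    by auto
  ultimately show ?thesis
    unfolding tc_faces_def octagons by (simp add: card_Un_disjoint card_tc_triangles)
qed

theorem mainTheorem10:
  shows "\<not> has_facet_path tc_vertices tc_faces tc_inc"
proof
  assume "has_facet_path tc_vertices tc_faces tc_inc"
  then obtain vs fs where "facet_path tc_vertices tc_faces tc_inc vs fs"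
    unfolding has_facet_path_def by blast
  then have "2 * card (Tri ` {0..<8}) \<le> card tc_faces + 1"
    by (rule facet_path_vertex_disjoint_facets_card_le)
       (auto simp: tc_faces_def dest: tc_triangles_vertex_disjoint)
  then show False
    by (simp add: card_tc_triangles card_tc_faces)
qed

end
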